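(* Let $\mu\in(0,1)$ and let $\beta:[0,\infty)\to(0,\infty)$ be positive, bounded, non-increasing with $\lim_{a\to\infty}a\beta(a)=\mu$, and suppose $\beta(a)=\frac{\mu}{1+a}+g(a)$ where $g\in L^1(0,\infty)$ and there exist $K_0,\alpha>0$ with $\int_a^\infty|g(s)|ds\le K_0(1+a)^{-\alpha}$ for all $a\ge0$. Let $B(a)=\int_0^a\beta$ and $W(\tau,b)=C(\tau)e^{-B(e^{\tau}b)}(1-b)^{\mu-1}$ on $[0,1)$ with $C(\tau)>0$ such that $\int_0^1W(\tau,b)db=1$. Then there exists $M>0$ such that for all $\tau\ge0$, $$\left|\mu\int_0^1\left[\frac{e^{\tau}b}{1+e^{\tau}b}-1\right]W(\tau,b)\,db\right|\le Me^{-(1-\mu)\tau}.$$ *)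

theory Defs
  imports "HOL-Analysis.Analysis"
begin

definition Bint :: "(real \<Rightarrow> real) \<Rightarrow> real \<Rightarrow> real" where
  "Bint \<beta> a = integral {0..a} \<beta>"

definition Wfun :: "real \<Rightarrow> (real \<Rightarrow> real) \<Rightarrow> (real \<Rightarrow> real) \<Rightarrow> real \<Rightarrow> real \<Rightarrow> real" where
  "Wfun \<mu> \<beta> C \<tau> b = C \<tau> * exp (- Bint \<beta> (exp \<tau> * b)) * (1 - b) powr (\<mu> - 1)"

end

theory Submission
  imports Defs
begin

text \<open>
  Put \<open>x = exp \<tau>\<close>, so the integrand is \<open>- W b / (1 + x b)\<close>. As \<open>B\<close> is non-decreasing and
  \<open>(1 - b) powr (\<mu> - 1) \<ge> 1\<close>, the weight is at least \<open>C \<tau> exp (- B x)\<close> on \<open>[0,1)\<close>, so the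
  normalisation forces \<open>C \<tau> exp (- B x) \<le> 1\<close>. Comparing \<open>\<beta>\<close> with \<open>\<mu> / (1 + a)\<close> gives
  \<open>B x - B (x b) \<le> \<mu> ln ((1 + x) / (1 + x b)) + \<parallel>g\<parallel>\<^sub>1\<close>, hence
  \<open>W b / (1 + x b) = O ((1 + x) powr \<mu> * (1 + x b) powr (- \<mu> - 1))\<close> for \<open>b \<le> 1/2\<close>,
  whose integral is \<open>O (x powr (\<mu> - 1))\<close>; for \<open>b \<ge> 1/2\<close> simply \<open>1 / (1 + x b) \<le> 2 / x\<close>.
\<close>

lemma has_integral_Ico_iff_Icc:
  fixes f :: "real \<Rightarrow> 'a::banach"
  shows "(f has_integral I) {a..<b} \<longleftrightarrow> (f has_integral I) {a..b}"
  by (rule has_integral_spike_set_eq; rule negligible_subset[of "{b}"]) auto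

lemma integrable_on_Ico_iff_Icc:
  fixes f :: "real \<Rightarrow> 'a::banach"
  shows "f integrable_on {a..<b} \<longleftrightarrow> f integrable_on {a..b}"
  by (simp add: integrable_on_def has_integral_Ico_iff_Icc)

lemma integral_Ico_eq_Icc:
  fixes f :: "real \<Rightarrow> 'a::banach"
  shows "integral {a..<b} f = integral {a..b} f"
  by (simp add: integral_def has_integral_Ico_iff_Icc integrable_on_Ico_iff_Icc)

lemma has_integral_one_plus_powr:
  fixes x \<mu> t :: real
  assumes "0 < x" "0 < \<mu>" "0 \<le> t"
  shows "((\<lambda>b. (1 + x * b) powr (- \<mu> - 1)) has_integral
           (1 - (1 + x * t) powr (- \<mu>)) / (\<mu> * x)) {0..t}"
proof -
  define F where "F b = - ((1 + x * b) powr (- \<mu>)) / (\<mu> * x)" for b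
  have "((\<lambda>b. (1 + x * b) powr (- \<mu> - 1)) has_integral F t - F 0) {0..t}"
  proof (rule fundamental_theorem_of_calculus)
    fix b assume "b \<in> {0..t}"
    then have "0 < 1 + x * b" using assms by (simp add: add_pos_nonneg)
    then have "(F has_real_derivative - (- \<mu> * (1 + x * b) powr (- \<mu> - 1) * x) / (\<mu> * x))
        (at b within {0..t})"
      unfolding F_def by (auto intro!: derivative_eq_intros)
    moreover have "- (- \<mu> * (1 + x * b) powr (- \<mu> - 1) * x) / (\<mu> * x) = (1 + x * b) powr (- \<mu> - 1)"
      using assms by (simp add: field_simps)
    ultimately show "(F has_vector_derivative (1 + x * b) powr (- \<mu> - 1)) (at b within {0..t})"
      by (simp add: has_real_derivative_iff_has_vector_derivative)
  qed (use assms in simp)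
  then show ?thesis by (simp add: F_def diff_divide_distrib)
qed

lemma integrable_on_Icc_if_L1_perturbation:
  fixes \<mu> :: real and \<beta> :: "real \<Rightarrow> real"
  assumes "(\<lambda>a. \<beta> a - \<mu> / (1 + a)) absolutely_integrable_on {0..}" "0 \<le> a"
  shows "\<beta> integrable_on {a..c}"
proof -
  have "(\<lambda>s. \<beta> s - \<mu> / (1 + s)) integrable_on {a..c}"
    using assms by (intro integrable_on_subinterval[of _ "{0..}"])
      (auto simp: absolutely_integrable_on_def)
  moreover have "(\<lambda>s. \<mu> / (1 + s)) integrable_on {a..c}"
    using assms(2) by (intro integrable_continuous_interval continuous_intros) auto
  ultimately have "(\<lambda>s. (\<beta> s - \<mu> / (1 + s)) + \<mu> / (1 + s)) integrable_on {a..c}"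
    by (rule integrable_add)
  then show ?thesis by simp
qed

lemma Bint_diff_eq_integral:
  assumes "\<beta> integrable_on {0..c}" "0 \<le> a" "a \<le> c"
  shows "Bint \<beta> c - Bint \<beta> a = integral {a..c} \<beta>"
  using Henstock_Kurzweil_Integration.integral_combine[OF assms(2,3) assms(1)]
  by (simp add: Bint_def)

lemma Bint_mono:
  fixes \<mu> :: real
  assumes beta_nonneg: "\<And>s. 0 \<le> s \<Longrightarrow> 0 \<le> \<beta> s"
    and g_L1: "(\<lambda>a. \<beta> a - \<mu> / (1 + a)) absolutely_integrable_on {0..}"
    and ac: "0 \<le> a" "a \<le> c"
  shows "Bint \<beta> a \<le> Bint \<beta> c"
proof -
  have "0 \<le> integral {a..c} \<beta>"
    using ac beta_nonneg
    by (intro integral_nonneg integrable_on_Icc_if_L1_perturbation[OF g_L1 ac(1)]) auto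
  moreover have "Bint \<beta> c - Bint \<beta> a = integral {a..c} \<beta>"
    using ac by (intro Bint_diff_eq_integral integrable_on_Icc_if_L1_perturbation[OF g_L1]) auto
  ultimately show ?thesis by simp
qed

lemma has_integral_inverse_one_plus:
  fixes \<mu> a c :: real
  assumes "0 \<le> a" "a \<le> c"
  shows "((\<lambda>s. \<mu> / (1 + s)) has_integral \<mu> * (ln (1 + c) - ln (1 + a))) {a..c}"
proof -
  have "((\<lambda>s. \<mu> / (1 + s)) has_integral \<mu> * ln (1 + c) - \<mu> * ln (1 + a)) {a..c}"
  proof (rule fundamental_theorem_of_calculus[OF assms(2)])
    fix s assume "s \<in> {a..c}"
    then have "0 < 1 + s" using assms by auto
    then have "((\<lambda>s. \<mu> * ln (1 + s)) has_real_derivative \<mu> / (1 + s)) (at s within {a..c})"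
      by (auto intro!: derivative_eq_intros simp: field_simps)
    then show "((\<lambda>s. \<mu> * ln (1 + s)) has_vector_derivative \<mu> / (1 + s)) (at s within {a..c})"
      by (simp add: has_real_derivative_iff_has_vector_derivative)
  qed
  then show ?thesis by (simp add: right_diff_distrib)
qed

lemma Bint_diff_le:
  fixes \<mu> :: real
  assumes g_L1: "(\<lambda>a. \<beta> a - \<mu> / (1 + a)) absolutely_integrable_on {0..}"
    and ac: "0 \<le> a" "a \<le> c"
  shows "Bint \<beta> c - Bint \<beta> a
           \<le> \<mu> * (ln (1 + c) - ln (1 + a)) + integral {0..} (\<lambda>s. \<bar>\<beta> s - \<mu> / (1 + s)\<bar>)"
proof -
  let ?g = "\<lambda>s. \<beta> s - \<mu> / (1 + s)"
  have g: "?g integrable_on {a..c}"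
    using g_L1 ac by (intro integrable_on_subinterval[of _ "{0..}"])
      (auto simp: absolutely_integrable_on_def)
  have abs_g: "(\<lambda>s. \<bar>?g s\<bar>) integrable_on {0..}"
    using g_L1 by (auto simp: absolutely_integrable_on_def)
  have abs_g_ac: "(\<lambda>s. \<bar>?g s\<bar>) integrable_on {a..c}"
    using abs_g ac by (intro integrable_on_subinterval[of _ "{0..}"]) auto
  have "integral {a..c} ?g \<le> integral {a..c} (\<lambda>s. \<bar>?g s\<bar>)"
    by (intro integral_le g abs_g_ac) auto
  also have "\<dots> \<le> integral {0..} (\<lambda>s. \<bar>?g s\<bar>)"
    using ac by (intro integral_subset_le abs_g_ac abs_g) auto
  finally have g_le: "integral {a..c} ?g \<le> integral {0..} (\<lambda>s. \<bar>?g s\<bar>)" .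
  note log = has_integral_inverse_one_plus[OF ac, of \<mu>]
  have "integral {a..c} \<beta> = integral {a..c} (\<lambda>s. ?g s + \<mu> / (1 + s))"
    by simp
  also have "\<dots> = integral {a..c} ?g + integral {a..c} (\<lambda>s. \<mu> / (1 + s))"
    by (rule integral_add[OF g has_integral_integrable[OF log]])
  finally have "integral {a..c} \<beta> = integral {a..c} ?g + integral {a..c} (\<lambda>s. \<mu> / (1 + s))" .
  moreover have "Bint \<beta> c - Bint \<beta> a = integral {a..c} \<beta>"
    using ac by (intro Bint_diff_eq_integral integrable_on_Icc_if_L1_perturbation[OF g_L1]) auto
  ultimately show ?thesis
    using g_le integral_unique[OF log] by simp
qed

context
  fixes \<mu> :: real and \<beta> C :: "real \<Rightarrow> real" and \<tau> :: real
  assumes mu: "0 < \<mu>" "\<mu> < 1"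
    and beta_nonneg: "\<And>s. 0 \<le> s \<Longrightarrow> 0 \<le> \<beta> s"
    and g_L1: "(\<lambda>a. \<beta> a - \<mu> / (1 + a)) absolutely_integrable_on {0..}"
    and tau: "0 \<le> \<tau>"
    and C_pos: "0 < C \<tau>"
begin

lemma Wfun_nonneg: "0 \<le> Wfun \<mu> \<beta> C \<tau> b"
  using C_pos by (simp add: Wfun_def)

text \<open>A non-integrable function has integral \<open>0\<close>, so the normalisation alone gives integrability.\<close>

lemma Wfun_has_integral:
  assumes W_norm: "integral {0..<1} (Wfun \<mu> \<beta> C \<tau>) = 1"
  shows "(Wfun \<mu> \<beta> C \<tau> has_integral 1) {0..<1}"
proof -
  have "Wfun \<mu> \<beta> C \<tau> integrable_on {0..<1}"
    using W_norm not_integrable_integral by fastforce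
  then show ?thesis
    using W_norm integrable_integral by fastforce
qed

lemma Wfun_ge_prefactor:
  assumes b: "b \<in> {0..<1}"
  shows "C \<tau> * exp (- Bint \<beta> (exp \<tau>)) \<le> Wfun \<mu> \<beta> C \<tau> b"
proof -
  have "Bint \<beta> (exp \<tau> * b) \<le> Bint \<beta> (exp \<tau>)"
    using b by (intro Bint_mono[OF beta_nonneg g_L1]) (auto simp: mult_le_cancel_left1)
  moreover have "1 \<le> (1 - b) powr (\<mu> - 1)"
  proof -
    have "(1 - b) powr (1 - \<mu>) \<le> 1"
      using b mu by (intro powr_le1) auto
    moreover have "(1 - b) powr (\<mu> - 1) = 1 / (1 - b) powr (1 - \<mu>)"
      using b by (simp add: powr_minus_divide[symmetric])
    ultimately show ?thesis
      using b by simp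
  qed
  ultimately have "C \<tau> * exp (- Bint \<beta> (exp \<tau>)) * 1
      \<le> C \<tau> * exp (- Bint \<beta> (exp \<tau> * b)) * (1 - b) powr (\<mu> - 1)"
    using C_pos by (intro mult_mono) auto
  then show ?thesis
    by (simp add: Wfun_def)
qed

lemma Wfun_prefactor_le_one:
  assumes W_norm: "integral {0..<1} (Wfun \<mu> \<beta> C \<tau>) = 1"
  shows "C \<tau> * exp (- Bint \<beta> (exp \<tau>)) \<le> 1"
proof -
  have W_int: "Wfun \<mu> \<beta> C \<tau> integrable_on {0..<1}"
    using Wfun_has_integral[OF W_norm] by blast
  have const_int: "(\<lambda>_. C \<tau> * exp (- Bint \<beta> (exp \<tau>))) integrable_on {0..<1::real}"
    unfolding integrable_on_Ico_iff_Icc by (rule integrable_const_ivl)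
  have "integral {0..<1::real} (\<lambda>_. C \<tau> * exp (- Bint \<beta> (exp \<tau>)))
      \<le> integral {0..<1} (Wfun \<mu> \<beta> C \<tau>)"
    by (rule integral_le[OF const_int W_int Wfun_ge_prefactor])
  then show ?thesis
    using W_norm by (simp add: integral_Ico_eq_Icc)
qed

lemma Wfun_le_near_zero:
  assumes b: "b \<in> {0..1/2}"
  shows "Wfun \<mu> \<beta> C \<tau> b
           \<le> C \<tau> * exp (- Bint \<beta> (exp \<tau>)) * exp (integral {0..} (\<lambda>s. \<bar>\<beta> s - \<mu> / (1 + s)\<bar>))
             * 2 powr (1 - \<mu>) * (1 + exp \<tau>) powr \<mu> * (1 + exp \<tau> * b) powr (- \<mu>)"
proof -
  define x where "x = exp \<tau>"
  define G where "G = integral {0..} (\<lambda>s. \<bar>\<beta> s - \<mu> / (1 + s)\<bar>)"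
  have x: "1 \<le> x" using tau by (simp add: x_def)
  have pos: "0 < 1 + x * b" using b x by (simp add: add_pos_nonneg)
  have "Bint \<beta> x - Bint \<beta> (x * b) \<le> \<mu> * (ln (1 + x) - ln (1 + x * b)) + G"
    unfolding G_def using b x by (intro Bint_diff_le[OF g_L1]) (auto simp: mult_le_cancel_left1)
  then have "exp (- Bint \<beta> (x * b)) \<le> exp (- Bint \<beta> x) * exp (\<mu> * (ln (1 + x) - ln (1 + x * b)) + G)"
    by (simp flip: exp_add)
  also have "\<dots> = exp (- Bint \<beta> x) * exp G * (1 + x) powr \<mu> * (1 + x * b) powr (- \<mu>)"
    using pos x by (simp add: powr_def exp_add exp_diff right_diff_distrib exp_minus field_simps)
  finally have exp_le: "exp (- Bint \<beta> (x * b)) \<le> \<dots>" .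
  have "(1 - b) powr (\<mu> - 1) = (1 / (1 - b)) powr (1 - \<mu>)"
    using b by (simp add: powr_divide powr_minus_divide[symmetric])
  also have "\<dots> \<le> 2 powr (1 - \<mu>)"
    using b mu by (intro powr_mono2) (auto simp: field_simps)
  finally have "(1 - b) powr (\<mu> - 1) \<le> 2 powr (1 - \<mu>)" .
  then have "C \<tau> * exp (- Bint \<beta> (x * b)) * (1 - b) powr (\<mu> - 1)
      \<le> C \<tau> * (exp (- Bint \<beta> x) * exp G * (1 + x) powr \<mu> * (1 + x * b) powr (- \<mu>))
        * 2 powr (1 - \<mu>)"
    using exp_le C_pos by (intro mult_mono) auto
  then show ?thesis
    unfolding Wfun_def x_def G_def by (simp add: mult_ac)
qed

lemma Wfun_div_le:
  assumes W_norm: "integral {0..<1} (Wfun \<mu> \<beta> C \<tau>) = 1"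
    and b: "b \<in> {0..<1}"
  shows "Wfun \<mu> \<beta> C \<tau> b / (1 + exp \<tau> * b)
           \<le> exp (integral {0..} (\<lambda>s. \<bar>\<beta> s - \<mu> / (1 + s)\<bar>)) * 2 powr (1 - \<mu>)
               * (1 + exp \<tau>) powr \<mu> * (1 + exp \<tau> * b) powr (- \<mu> - 1)
             + 2 / exp \<tau> * Wfun \<mu> \<beta> C \<tau> b"
    (is "?V \<le> ?Q * _ + _")
proof -
  define x where "x = exp \<tau>"
  have x: "1 \<le> x" using tau by (simp add: x_def)
  have pos: "0 < 1 + x * b" using b x by (simp add: add_pos_nonneg)
  have Q: "0 \<le> ?Q" by simp
  show ?thesis
  proof (cases "b \<le> 1/2")
    case True
    have "Wfun \<mu> \<beta> C \<tau> b \<le> C \<tau> * exp (- Bint \<beta> (exp \<tau>)) * (?Q * (1 + x * b) powr (- \<mu>))"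
      using Wfun_le_near_zero[of b] True b by (simp add: x_def mult_ac)
    also have "\<dots> \<le> 1 * (?Q * (1 + x * b) powr (- \<mu>))"
      using Wfun_prefactor_le_one[OF W_norm] by (intro mult_right_mono) auto
    finally have "?V \<le> ?Q * (1 + x * b) powr (- \<mu>) / (1 + x * b)"
      using pos by (simp add: x_def divide_right_mono)
    also have "\<dots> = ?Q * (1 + x * b) powr (- \<mu> - 1)"
      using pos by (simp add: powr_diff)
    finally show ?thesis
      using Wfun_nonneg by (simp add: x_def add_increasing2)
  next
    case False
    then have "x * (1/2) \<le> x * b"
      using x by (intro mult_left_mono) auto
    then have "x \<le> 2 * (1 + x * b)"
      by simp
    then have "1 / (1 + x * b) \<le> 2 / x"
      using pos x by (simp add: field_simps)
    then have "?V \<le> 2 / exp \<tau> * Wfun \<mu> \<beta> C \<tau> b"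
      using Wfun_nonneg[of b] mult_right_mono unfolding x_def by (fastforce simp: divide_inverse mult.commute)
    then show ?thesis
      using Q pos by (simp add: add_increasing)
  qed
qed

lemma integrable_Wfun_div:
  assumes W_norm: "integral {0..<1} (Wfun \<mu> \<beta> C \<tau>) = 1"
  shows "(\<lambda>b. Wfun \<mu> \<beta> C \<tau> b / (1 + exp \<tau> * b)) integrable_on {0..<1}"
proof -
  have W_int: "Wfun \<mu> \<beta> C \<tau> integrable_on {0..<1}"
    using Wfun_has_integral[OF W_norm] by blast
  have "(\<lambda>b. 1 / (1 + exp \<tau> * b)) \<in> borel_measurable (lebesgue_on {0..<1})"
    by (intro continuous_imp_measurable_on_sets_lebesgue continuous_intros)
      (auto simp: add_pos_nonneg[THEN less_imp_neq, symmetric])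
  moreover have "bounded ((\<lambda>b. 1 / (1 + exp \<tau> * b)) ` {0..<1})"
  proof -
    have "norm (1 / (1 + exp \<tau> * b)) \<le> 1" if "b \<in> {0..<1}" for b
    proof -
      have "1 \<le> 1 + exp \<tau> * b" using that by simp
      then show ?thesis by simp
    qed
    then show ?thesis
      by (intro boundedI[of _ 1]) auto
  qed
  ultimately have "(\<lambda>b. 1 / (1 + exp \<tau> * b) * Wfun \<mu> \<beta> C \<tau> b) absolutely_integrable_on {0..<1}"
    by (intro absolutely_integrable_bounded_measurable_product_real
        nonnegative_absolutely_integrable_1 W_int Wfun_nonneg) auto
  then show ?thesis
    by (simp add: absolutely_integrable_on_def)
qed

lemma integral_Wfun_div_le:
  assumes W_norm: "integral {0..<1} (Wfun \<mu> \<beta> C \<tau>) = 1"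
  shows "integral {0..<1} (\<lambda>b. Wfun \<mu> \<beta> C \<tau> b / (1 + exp \<tau> * b))
           \<le> (2 * exp (integral {0..} (\<lambda>s. \<bar>\<beta> s - \<mu> / (1 + s)\<bar>)) / \<mu> + 2) * exp (- (1 - \<mu>) * \<tau>)"
proof -
  define x where "x = exp \<tau>"
  define G where "G = integral {0..} (\<lambda>s. \<bar>\<beta> s - \<mu> / (1 + s)\<bar>)"
  define Q where "Q = exp G * 2 powr (1 - \<mu>) * (1 + x) powr \<mu>"
  define I where "I = (1 - (1 + x) powr (- \<mu>)) / (\<mu> * x)"
  have x: "1 \<le> x" using tau by (simp add: x_def)
  note W_has = Wfun_has_integral[OF W_norm]
  have "((\<lambda>b. (1 + x * b) powr (- \<mu> - 1)) has_integral I) {0..<1}"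
    unfolding has_integral_Ico_iff_Icc I_def using has_integral_one_plus_powr[of x \<mu> 1] x mu by simp
  then have "((\<lambda>b. Q * (1 + x * b) powr (- \<mu> - 1) + 2 / x * Wfun \<mu> \<beta> C \<tau> b)
      has_integral Q * I + 2 / x * 1) {0..<1}"
    by (intro has_integral_add has_integral_mult_right W_has)
  then have "integral {0..<1} (\<lambda>b. Wfun \<mu> \<beta> C \<tau> b / (1 + exp \<tau> * b)) \<le> Q * I + 2 / x"
    using Wfun_div_le[OF W_norm] unfolding Q_def G_def x_def
    by (intro has_integral_le[OF integrable_integral[OF integrable_Wfun_div[OF W_norm]]]) auto
  moreover have "Q * I \<le> 2 * exp G / \<mu> * x powr (\<mu> - 1)"
  proof -
    have "(1 + x) powr \<mu> \<le> (2 * x) powr \<mu>"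
      using x mu by (intro powr_mono2) auto
    then have "Q \<le> exp G * 2 powr (1 - \<mu>) * (2 powr \<mu> * x powr \<mu>)"
      unfolding Q_def using x by (simp add: powr_mult)
    also have "\<dots> = 2 * exp G * x powr \<mu>"
      by (simp add: powr_add[symmetric])
    finally have Q_le: "Q \<le> 2 * exp G * x powr \<mu>" .
    have "Q * I \<le> Q * (1 / (\<mu> * x))"
      unfolding I_def Q_def using mu x by (intro mult_left_mono divide_right_mono) auto
    also have "\<dots> \<le> 2 * exp G * x powr \<mu> * (1 / (\<mu> * x))"
      using Q_le mu x by (intro mult_right_mono) auto
    also have "\<dots> = 2 * exp G / \<mu> * x powr (\<mu> - 1)"
      using x mu by (simp add: powr_diff)
    finally show ?thesis .
  qed
  moreover have "2 / x \<le> 2 * x powr (\<mu> - 1)"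
  proof -
    have "x powr (- 1) \<le> x powr (\<mu> - 1)"
      using x mu by (intro powr_mono) auto
    then show ?thesis
      using x by (simp add: powr_minus divide_inverse)
  qed
  moreover have "x powr (\<mu> - 1) = exp (- (1 - \<mu>) * \<tau>)"
    unfolding x_def by (simp add: powr_def algebra_simps)
  ultimately show ?thesis
    unfolding G_def by (simp add: algebra_simps)
qed

lemma abs_integral_Wfun_deviation_le:
  assumes W_norm: "integral {0..<1} (Wfun \<mu> \<beta> C \<tau>) = 1"
  shows "\<bar>\<mu> * integral {0..<1} (\<lambda>b. (exp \<tau> * b / (1 + exp \<tau> * b) - 1) * Wfun \<mu> \<beta> C \<tau> b)\<bar>
           \<le> (2 * exp (integral {0..} (\<lambda>s. \<bar>\<beta> s - \<mu> / (1 + s)\<bar>)) + 2 * \<mu>) * exp (- (1 - \<mu>) * \<tau>)"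
proof -
  let ?V = "\<lambda>b. Wfun \<mu> \<beta> C \<tau> b / (1 + exp \<tau> * b)"
  have "integral {0..<1} (\<lambda>b. (exp \<tau> * b / (1 + exp \<tau> * b) - 1) * Wfun \<mu> \<beta> C \<tau> b)
      = integral {0..<1} (\<lambda>b. - ?V b)"
  proof (rule integral_cong)
    fix b :: real assume "b \<in> {0..<1}"
    then have "0 < 1 + exp \<tau> * b" by (simp add: add_pos_nonneg)
    then show "(exp \<tau> * b / (1 + exp \<tau> * b) - 1) * Wfun \<mu> \<beta> C \<tau> b = - ?V b"
      by (simp add: field_simps)
  qed
  also have "\<dots> = - integral {0..<1} ?V"
    by (rule integral_neg)
  finally have eq: "integral {0..<1} (\<lambda>b. (exp \<tau> * b / (1 + exp \<tau> * b) - 1) * Wfun \<mu> \<beta> C \<tau> b)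
      = - integral {0..<1} ?V" .
  have "0 \<le> ?V b" if "b \<in> {0..<1}" for b
    using that Wfun_nonneg[of b] by (intro divide_nonneg_pos) (auto simp: add_pos_nonneg)
  then have "0 \<le> integral {0..<1} ?V"
    by (intro integral_nonneg integrable_Wfun_div[OF W_norm])
  then have "\<bar>\<mu> * integral {0..<1} (\<lambda>b. (exp \<tau> * b / (1 + exp \<tau> * b) - 1) * Wfun \<mu> \<beta> C \<tau> b)\<bar>
      = \<mu> * integral {0..<1} ?V"
    unfolding eq using mu by (simp add: abs_mult)
  also have "\<dots> \<le> \<mu> * ((2 * exp (integral {0..} (\<lambda>s. \<bar>\<beta> s - \<mu> / (1 + s)\<bar>)) / \<mu> + 2)
      * exp (- (1 - \<mu>) * \<tau>))"
    using mu by (intro mult_left_mono integral_Wfun_div_le[OF W_norm]) simp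
  also have "\<dots> = (2 * exp (integral {0..} (\<lambda>s. \<bar>\<beta> s - \<mu> / (1 + s)\<bar>)) + 2 * \<mu>) * exp (- (1 - \<mu>) * \<tau>)"
    using mu by (simp add: field_simps)
  finally show ?thesis .
qed

end

theorem lemma8:
  fixes \<mu> :: real and \<beta> C :: "real \<Rightarrow> real" and K\<^sub>0 \<alpha> :: real
  assumes mu: "0 < \<mu>" "\<mu> < 1"
    and beta_pos: "\<forall>a\<ge>0. \<beta> a > 0"
    and beta_bdd: "\<exists>K. \<forall>a\<ge>0. \<beta> a \<le> K"
    and beta_noninc: "\<forall>x y. 0 \<le> x \<longrightarrow> x \<le> y \<longrightarrow> \<beta> y \<le> \<beta> x"
    and beta_lim: "((\<lambda>a. a * \<beta> a) \<longlongrightarrow> \<mu>) at_top"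
    and g_L1: "(\<lambda>a. \<beta> a - \<mu> / (1 + a)) absolutely_integrable_on {0..}"
    and K0: "K\<^sub>0 > 0" and alpha: "\<alpha> > 0"
    and g_tail: "\<forall>a\<ge>0. integral {a..} (\<lambda>s. \<bar>\<beta> s - \<mu> / (1 + s)\<bar>) \<le> K\<^sub>0 * (1 + a) powr (- \<alpha>)"
    and C_pos: "\<forall>\<tau>\<ge>0. C \<tau> > 0"
    and W_norm: "\<forall>\<tau>\<ge>0. integral {0..<1} (Wfun \<mu> \<beta> C \<tau>) = 1"
  shows "\<exists>M>0. \<forall>\<tau>\<ge>0.
    \<bar>\<mu> * integral {0..<1} (\<lambda>b. (exp \<tau> * b / (1 + exp \<tau> * b) - 1) * Wfun \<mu> \<beta> C \<tau> b)\<bar>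
      \<le> M * exp (- (1 - \<mu>) * \<tau>)"
proof -
  have beta_nonneg: "\<And>s. 0 \<le> s \<Longrightarrow> 0 \<le> \<beta> s"
    using beta_pos by (simp add: less_imp_le)
  have G: "integral {0..} (\<lambda>s. \<bar>\<beta> s - \<mu> / (1 + s)\<bar>) \<le> K\<^sub>0"
    using g_tail[rule_format, of 0] by simp
  show ?thesis
  proof (intro exI[of _ "2 * exp K\<^sub>0 + 2 * \<mu>"] conjI allI impI)
    show "0 < 2 * exp K\<^sub>0 + 2 * \<mu>"
      using mu by (intro add_pos_pos) auto
    fix \<tau> :: real assume tau: "0 \<le> \<tau>"
    have "\<bar>\<mu> * integral {0..<1} (\<lambda>b. (exp \<tau> * b / (1 + exp \<tau> * b) - 1) * Wfun \<mu> \<beta> C \<tau> b)\<bar>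
        \<le> (2 * exp (integral {0..} (\<lambda>s. \<bar>\<beta> s - \<mu> / (1 + s)\<bar>)) + 2 * \<mu>) * exp (- (1 - \<mu>) * \<tau>)"
      by (rule abs_integral_Wfun_deviation_le[where \<beta> = \<beta> and C = C and \<tau> = \<tau>,
            OF mu beta_nonneg g_L1 tau C_pos[rule_format, OF tau] W_norm[rule_format, OF tau]])
    also have "\<dots> \<le> (2 * exp K\<^sub>0 + 2 * \<mu>) * exp (- (1 - \<mu>) * \<tau>)"
      using G by (intro mult_right_mono) auto
    finally show "\<bar>\<mu> * integral {0..<1} (\<lambda>b. (exp \<tau> * b / (1 + exp \<tau> * b) - 1) * Wfun \<mu> \<beta> C \<tau> b)\<bar>
        \<le> (2 * exp K\<^sub>0 + 2 * \<mu>) * exp (- (1 - \<mu>) * \<tau>)" .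
  qed
qed

end
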